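(* Every graph of pathwidth at most $1$ and order $n$ has at most $2^{n/2}$ independent dominating sets (equivalently, maximal independent sets). The bound is attained by the path on $2$ vertices.
   Context: An independent dominating set of $G=(V,E)$ is a set $D\subseteq V$ with no edge inside $D$ such that every vertex outside $D$ has at least one neighbour in $D$; i.e. a $(\{0\},\mathbb{N}^+)$-dominating set. Order = number of vertices; pathwidth is the standard notion. *)

theory Defs
  imports Complex_Main
begin

definition simple_graph :: "'a set \<Rightarrow> 'a set set \<Rightarrow> bool" where
  "simple_graph V E \<longleftrightarrow> finite V \<and>
     (\<forall>e\<in>E. \<exists>u v. e = {u, v} \<and> u \<noteq> v \<and> u \<in> V \<and> v \<in> V)"

definition path_decomposition :: "'a set \<Rightarrow> 'a set set \<Rightarrow> 'a set list \<Rightarrow> bool" where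
  "path_decomposition V E bs \<longleftrightarrow>
     (\<forall>i<length bs. bs ! i \<subseteq> V) \<and>
     (\<forall>v\<in>V. \<exists>i<length bs. v \<in> bs ! i) \<and>
     (\<forall>e\<in>E. \<exists>i<length bs. e \<subseteq> bs ! i) \<and>
     (\<forall>v i j k. i \<le> j \<and> j \<le> k \<and> k < length bs \<and> v \<in> bs ! i \<and> v \<in> bs ! k
        \<longrightarrow> v \<in> bs ! j)"

definition pd_width :: "'a set list \<Rightarrow> nat" where
  "pd_width bs = (if bs = [] then 0 else Max (card ` set bs) - 1)"

definition pathwidth :: "'a set \<Rightarrow> 'a set set \<Rightarrow> nat" where
  "pathwidth V E = (LEAST k. \<exists>bs. path_decomposition V E bs \<and> pd_width bs = k)"

definition indep_dominating :: "'a set \<Rightarrow> 'a set set \<Rightarrow> 'a set \<Rightarrow> bool" where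
  "indep_dominating V E D \<longleftrightarrow> D \<subseteq> V \<and>
     (\<forall>u\<in>D. \<forall>v\<in>D. {u, v} \<notin> E) \<and>
     (\<forall>v\<in>V - D. \<exists>u\<in>D. {u, v} \<in> E)"

end

theory Submission
  imports Defs
begin

text \<open>Every independent dominating set contains a vertex v of degree at most one or its
  neighbour u. Deleting the closed neighbourhood of x maps the sets containing x injectively to
  independent dominating sets of a graph on at most n - 2 vertices (n - 1 if v is isolated), so
  by induction the count c satisfies c^2 \<le> (c(v) + c(u))^2 \<le> 2 (c(v)^2 + c(u)^2) \<le> 2^n.
  Pathwidth at most one provides such a vertex in every induced subgraph: the vertex whose last
  bag comes first shares that bag, of size two, with all its neighbours.\<close>

definition nbr :: "'a set set \<Rightarrow> 'a \<Rightarrow> 'a set" where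
  "nbr E x = {w. {x, w} \<in> E}"

definition induced :: "'a set set \<Rightarrow> 'a set \<Rightarrow> 'a set set" where
  "induced E W = {e \<in> E. e \<subseteq> W}"

text \<open>For simple graphs this says exactly that the graph is a forest.\<close>
definition one_degenerate :: "'a set \<Rightarrow> 'a set set \<Rightarrow> bool" where
  "one_degenerate V E \<longleftrightarrow> (\<forall>W\<subseteq>V. W \<noteq> {} \<longrightarrow> (\<exists>v\<in>W. \<exists>u. nbr (induced E W) v \<subseteq> {u}))"

lemma induced_induced: "W' \<subseteq> W \<Longrightarrow> induced (induced E W) W' = induced E W'"
  by (auto simp: induced_def)

lemma simple_graph_edge_subset:
  assumes "simple_graph V E" "e \<in> E"
  shows "e \<subseteq> V"
proof -
  obtain u v where "e = {u, v}" "u \<in> V" "v \<in> V" using assms unfolding simple_graph_def by blast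
  then show ?thesis by simp
qed

lemma induced_self: "simple_graph V E \<Longrightarrow> induced E V = E"
  by (auto simp: induced_def dest: simple_graph_edge_subset)

lemma simple_graph_induced:
  assumes "simple_graph V E" "W \<subseteq> V"
  shows "simple_graph W (induced E W)"
  unfolding simple_graph_def
proof (intro conjI ballI)
  show "finite W" using assms finite_subset unfolding simple_graph_def by blast
  fix e assume "e \<in> induced E W"
  then have "e \<in> E" "e \<subseteq> W" by (auto simp: induced_def)
  then obtain u v where "e = {u, v}" "u \<noteq> v" using assms(1) unfolding simple_graph_def by blast
  then show "\<exists>u v. e = {u, v} \<and> u \<noteq> v \<and> u \<in> W \<and> v \<in> W" using \<open>e \<subseteq> W\<close> by auto
qed

lemma one_degenerate_induced:
  assumes "one_degenerate V E" "W \<subseteq> V"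
  shows "one_degenerate W (induced E W)"
  using assms by (auto simp: one_degenerate_def induced_induced)

lemma simple_graph_edgeD:
  assumes "simple_graph V E" "{x, y} \<in> E"
  shows "x \<in> V" "y \<in> V" "x \<noteq> y"
  using assms unfolding simple_graph_def by (auto simp: doubleton_eq_iff)

lemma finite_indep_dominating:
  assumes "simple_graph V E"
  shows "finite {D. indep_dominating V E D}"
proof (rule finite_subset)
  show "{D. indep_dominating V E D} \<subseteq> Pow V" by (auto simp: indep_dominating_def)
  show "finite (Pow V)" using assms by (simp add: simple_graph_def)
qed

lemma card_indep_dominating_containing_le:
  fixes x :: 'a
  assumes sg: "simple_graph V E"
  defines "W \<equiv> V - insert x (nbr E x)"
  shows "card {D. indep_dominating V E D \<and> x \<in> D} \<le> card {D. indep_dominating W (induced E W) D}"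
proof (rule card_inj_on_le[where f = "\<lambda>D. D - {x}"])
  show "finite {D. indep_dominating W (induced E W) D}"
    by (rule finite_indep_dominating[OF simple_graph_induced[OF sg]]) (auto simp: W_def)
  show "inj_on (\<lambda>D. D - {x}) {D. indep_dominating V E D \<and> x \<in> D}"
    by (rule inj_onI) (metis insert_Diff mem_Collect_eq)
  show "(\<lambda>D. D - {x}) ` {D. indep_dominating V E D \<and> x \<in> D}
        \<subseteq> {D. indep_dominating W (induced E W) D}"
  proof clarify
    fix D assume D: "indep_dominating V E D" "x \<in> D"
    have sub: "D - {x} \<subseteq> W"
      using D by (auto simp: W_def indep_dominating_def nbr_def)
    have "\<exists>y\<in>D - {x}. {y, w} \<in> induced E W" if w: "w \<in> W - (D - {x})" for w
    proof -
      have "w \<in> V - D" "{x, w} \<notin> E" using w by (auto simp: W_def nbr_def)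
      then obtain y where "y \<in> D" "{y, w} \<in> E" using D unfolding indep_dominating_def by blast
      moreover have "y \<noteq> x" using \<open>{x, w} \<notin> E\<close> calculation by auto
      ultimately show ?thesis using sub w by (auto simp: induced_def)
    qed
    then show "indep_dominating W (induced E W) (D - {x})"
      using sub D unfolding indep_dominating_def induced_def by auto
  qed
qed

lemma sq_le_of_le_add:
  fixes x a b p q m :: nat
  assumes "x \<le> a + b" "a\<^sup>2 \<le> 2 ^ p" "b\<^sup>2 \<le> 2 ^ q" "p \<le> m" "q \<le> m"
  shows "x\<^sup>2 \<le> 2 ^ (m + 2)"
proof -
  have "int (2 * a * b) \<le> int (a\<^sup>2 + b\<^sup>2)"
    using zero_le_power2[of "int a - int b"] by (simp add: power2_diff)
  then have ab: "2 * a * b \<le> a\<^sup>2 + b\<^sup>2" by (simp only: of_nat_le_iff)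
  have "x\<^sup>2 \<le> (a + b)\<^sup>2" using assms(1) by (rule power_mono) simp
  also have "\<dots> = a\<^sup>2 + 2 * a * b + b\<^sup>2" by (simp add: power2_sum)
  also have "\<dots> \<le> 2 * a\<^sup>2 + 2 * b\<^sup>2" using ab by simp
  also have "\<dots> \<le> 2 * 2 ^ m + 2 * 2 ^ m"
    using assms(2,3) power_increasing[OF assms(4), of "2::nat"] power_increasing[OF assms(5), of "2::nat"]
    by linarith
  also have "\<dots> = 2 ^ (m + 2)" by simp
  finally show ?thesis .
qed

lemma indep_dominating_meets_nbr:
  assumes "indep_dominating V E D" "v \<in> V - D"
  shows "D \<inter> nbr E v \<noteq> {}"
proof -
  obtain w where "w \<in> D" "{w, v} \<in> E" using assms unfolding indep_dominating_def by blast
  then show ?thesis by (auto simp: nbr_def insert_commute)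
qed

lemma card_indep_dominating_le_add:
  assumes "simple_graph V E" "v \<in> V" "nbr E v \<subseteq> {u}"
  shows "card {D. indep_dominating V E D}
    \<le> card {D. indep_dominating V E D \<and> v \<in> D} + card {D. indep_dominating V E D \<and> u \<in> D}"
proof -
  have "{D. indep_dominating V E D}
      \<subseteq> {D. indep_dominating V E D \<and> v \<in> D} \<union> {D. indep_dominating V E D \<and> u \<in> D}"
    using indep_dominating_meets_nbr[of V E _ v] assms(2,3) by blast
  from card_mono[OF _ this] show ?thesis
    by (rule le_trans[OF _ card_Un_le]) (use finite_indep_dominating[OF assms(1)] in auto)
qed

lemma card_indep_dominating_sq_le:
  assumes "simple_graph V E" "one_degenerate V E"
  shows "(card {D. indep_dominating V E D})\<^sup>2 \<le> 2 ^ card V"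
  using assms
proof (induction "card V" arbitrary: V E rule: less_induct)
  case less
  note sg = less.prems(1)
  have fV: "finite V" using sg by (simp add: simple_graph_def)
  define W where "W x = V - insert x (nbr E x)" for x
  define count where "count x = card {D. indep_dominating V E D \<and> x \<in> D}" for x
  have WV: "W x \<subseteq> V" for x by (auto simp: W_def)
  have IH: "(count x)\<^sup>2 \<le> 2 ^ card (W x)" if "x \<in> V" for x
  proof -
    have "(card {D. indep_dominating (W x) (induced E (W x)) D})\<^sup>2 \<le> 2 ^ card (W x)"
    proof (rule less.hyps)
      show "card (W x) < card V" using that fV by (intro psubset_card_mono) (auto simp: W_def)
    qed (use simple_graph_induced[OF sg WV] one_degenerate_induced[OF less.prems(2) WV] in auto)
    moreover have "count x \<le> card {D. indep_dominating (W x) (induced E (W x)) D}"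
      unfolding count_def W_def by (rule card_indep_dominating_containing_le[OF sg])
    ultimately show ?thesis by (meson le_trans power_mono zero_le)
  qed
  let ?I = "{D. indep_dominating V E D}"
  show ?case
  proof (cases "V = {}")
    case True
    then have "?I = {{}}" by (auto simp: indep_dominating_def)
    then show ?thesis using True by simp
  next
    case False
    then have "\<exists>v\<in>V. \<exists>u. nbr (induced E V) v \<subseteq> {u}"
      using less.prems(2) unfolding one_degenerate_def by blast
    then obtain v u where v: "v \<in> V" and vu: "nbr E v \<subseteq> {u}"
      unfolding induced_self[OF sg] by blast
    show ?thesis
    proof (cases "nbr E v = {}")
      case True
      then have "?I = {D. indep_dominating V E D \<and> v \<in> D}"
        using indep_dominating_meets_nbr[of V E _ v] v by blast
      then have "(card ?I)\<^sup>2 \<le> 2 ^ card (W v)" using IH[OF v] by (simp add: count_def)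
      also have "\<dots> \<le> 2 ^ card V" using card_mono[OF fV WV] by (intro power_increasing) auto
      finally show ?thesis .
    next
      case False
      then have "{v, u} \<in> E" using vu by (auto simp: nbr_def)
      then have uV: "u \<in> V" and "u \<noteq> v" using simple_graph_edgeD[OF sg, of v u] by auto
      have "card {u, v} \<le> card V" using uV v fV by (intro card_mono) auto
      then have two: "card (V - {u, v}) + 2 = card V"
        using uV v fV \<open>u \<noteq> v\<close> by (simp add: card_Diff_subset)
      have "card ?I \<le> count v + count u"
        unfolding count_def by (rule card_indep_dominating_le_add[OF sg v vu])
      moreover have "card (W v) \<le> card (V - {u, v})" "card (W u) \<le> card (V - {u, v})"
        using \<open>{v, u} \<in> E\<close> fV by (auto intro!: card_mono simp: W_def nbr_def insert_commute)
      ultimately have "(card ?I)\<^sup>2 \<le> 2 ^ (card (V - {u, v}) + 2)"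
        using sq_le_of_le_add IH[OF v] IH[OF uV] by blast
      then show ?thesis unfolding two .
    qed
  qed
qed

lemma pathwidth_attained:
  assumes "simple_graph V E"
  shows "\<exists>bs. path_decomposition V E bs \<and> pd_width bs = pathwidth V E"
proof -
  have "path_decomposition V E [V]"
    using assms unfolding path_decomposition_def simple_graph_def by auto
  then have "\<exists>k bs. path_decomposition V E bs \<and> pd_width bs = k" by blast
  from LeastI_ex[OF this] show ?thesis unfolding pathwidth_def .
qed

lemma card_le_pd_width:
  assumes "B \<in> set bs"
  shows "card B \<le> pd_width bs + 1"
proof -
  have "card B \<le> Max (card ` set bs)" using assms by (intro Max_ge) auto
  moreover have "bs \<noteq> []" using assms by auto
  ultimately show ?thesis unfolding pd_width_def by simp
qed

text \<open>The witness is a vertex whose last bag comes first: every neighbour shares a bag with it no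
  later than that bag and occurs in a bag no earlier, hence lies in that bag itself.\<close>
lemma path_decomposition_one_degenerate:
  assumes sg: "simple_graph V E" and pd: "path_decomposition V E bs"
    and small: "\<forall>B\<in>set bs. card B \<le> 2"
  shows "one_degenerate V E"
  unfolding one_degenerate_def
proof (intro allI impI)
  fix W assume WV: "W \<subseteq> V" and "W \<noteq> {}"
  from pd obtain bags: "\<forall>i<length bs. bs ! i \<subseteq> V" and cover: "\<forall>v\<in>V. \<exists>i<length bs. v \<in> bs ! i"
    and edges: "\<forall>e\<in>E. \<exists>i<length bs. e \<subseteq> bs ! i"
    and interval: "\<forall>v i j k. i \<le> j \<and> j \<le> k \<and> k < length bs \<and> v \<in> bs ! i \<and> v \<in> bs ! k
        \<longrightarrow> v \<in> bs ! j"
    unfolding path_decomposition_def by (elim conjE)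
  define l where "l x = Max {i. i < length bs \<and> x \<in> bs ! i}" for x
  have l: "l x < length bs" "x \<in> bs ! l x" if "x \<in> V" for x
  proof -
    have "{i. i < length bs \<and> x \<in> bs ! i} \<noteq> {}" using cover that by blast
    from Max_in[OF _ this] show "l x < length bs" "x \<in> bs ! l x" unfolding l_def by auto
  qed
  have l_ge: "i \<le> l x" if "i < length bs" "x \<in> bs ! i" for i x
    unfolding l_def using that by (intro Max_ge) auto
  obtain v where v: "v \<in> W" and v_min: "\<And>w. w \<in> W \<Longrightarrow> l v \<le> l w"
    using ex_has_least_nat[of "\<lambda>x. x \<in> W" _ l] \<open>W \<noteq> {}\<close> by blast
  have vV: "v \<in> V" using v WV by auto
  let ?B = "bs ! l v"
  have nbr_in_bag: "a \<in> ?B" "a \<noteq> v" if "a \<in> nbr (induced E W) v" for a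
  proof -
    have e: "{v, a} \<in> E" and aW: "a \<in> W" using that by (auto simp: nbr_def induced_def)
    then show "a \<noteq> v" using simple_graph_edgeD[OF sg] by blast
    obtain j where j: "j < length bs" "{v, a} \<subseteq> bs ! j" using edges e by blast
    have aV: "a \<in> V" using aW WV by auto
    show "a \<in> ?B"
    proof (rule interval[rule_format], intro conjI)
      show "j \<le> l v" using l_ge j by auto
      show "l v \<le> l a" using v_min aW by auto
      show "l a < length bs" "a \<in> bs ! l a" using l[OF aV] by auto
      show "a \<in> bs ! j" using j by auto
    qed
  qed
  have finB: "finite ?B" using bags l(1)[OF vV] sg unfolding simple_graph_def by (meson finite_subset)
  have cardB: "card ?B \<le> 2" using small l(1)[OF vV] by simp
  have nbr_unique: "a = b" if ab: "a \<in> nbr (induced E W) v" "b \<in> nbr (induced E W) v" for a b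
  proof (rule ccontr)
    assume "a \<noteq> b"
    moreover have "a \<noteq> v" "b \<noteq> v" "a \<in> ?B" "b \<in> ?B" using nbr_in_bag ab by auto
    ultimately have "card {v, a, b} = 3" "{v, a, b} \<subseteq> ?B" using l(2)[OF vV] by auto
    then have "3 \<le> card ?B" using card_mono[OF finB] by metis
    then show False using cardB by simp
  qed
  have "\<exists>u. nbr (induced E W) v \<subseteq> {u}"
  proof (cases "nbr (induced E W) v = {}")
    case False
    then obtain a where "a \<in> nbr (induced E W) v" by blast
    then have "nbr (induced E W) v \<subseteq> {a}" using nbr_unique by blast
    then show ?thesis ..
  qed simp
  then show "\<exists>v\<in>W. \<exists>u. nbr (induced E W) v \<subseteq> {u}" using v ..
qed

lemma one_degenerate_if_pathwidth_le_1:
  assumes sg: "simple_graph V E" and "pathwidth V E \<le> 1"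
  shows "one_degenerate V E"
proof -
  obtain bs where pd: "path_decomposition V E bs" and width: "pd_width bs \<le> 1"
    using pathwidth_attained[OF sg] assms(2) by auto
  have "\<forall>B\<in>set bs. card B \<le> 2"
    using card_le_pd_width[of _ bs] width by (metis add_le_mono1 le_trans one_add_one)
  then show ?thesis by (rule path_decomposition_one_degenerate[OF sg pd])
qed

lemma of_nat_le_two_powr_half:
  fixes x n :: nat
  assumes "x\<^sup>2 \<le> 2 ^ n"
  shows "real x \<le> 2 powr (real n / 2)"
proof (rule power2_le_imp_le)
  have "(2 powr (real n / 2))\<^sup>2 = 2 ^ n"
    by (simp add: power2_eq_square powr_realpow flip: powr_add)
  then show "(real x)\<^sup>2 \<le> (2 powr (real n / 2))\<^sup>2"
    using assms by (metis of_nat_le_iff of_nat_numeral of_nat_power)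
qed simp

lemma indep_dominating_K2: "{D. indep_dominating {0::nat, 1} {{0, 1}} D} = {{0}, {1}}"
proof -
  have "D = {0} \<or> D = {1}" if "indep_dominating {0::nat, 1} {{0, 1}} D" for D
  proof -
    have "D \<in> Pow {0, 1}" using that by (auto simp: indep_dominating_def)
    then show ?thesis using that by (auto simp: Pow_insert indep_dominating_def insert_commute)
  qed
  then show ?thesis by (auto simp: indep_dominating_def insert_commute)
qed

theorem mainTheorem6:
  shows "(\<forall>(V :: 'a set) E. simple_graph V E \<and> pathwidth V E \<le> 1 \<longrightarrow>
            real (card {D. indep_dominating V E D}) \<le> 2 powr (real (card V) / 2))
       \<and> (simple_graph {0::nat, 1} {{0, 1}} \<and> pathwidth {0::nat, 1} {{0, 1}} \<le> 1 \<and>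
            real (card {D. indep_dominating {0::nat, 1} {{0, 1}} D}) = 2 powr (real (card {0::nat, 1}) / 2))"
proof (intro conjI allI impI)
  fix V :: "'a set" and E
  assume "simple_graph V E \<and> pathwidth V E \<le> 1"
  then show "real (card {D. indep_dominating V E D}) \<le> 2 powr (real (card V) / 2)"
    by (intro of_nat_le_two_powr_half card_indep_dominating_sq_le one_degenerate_if_pathwidth_le_1) auto
next
  show "simple_graph {0::nat, 1} {{0, 1}}" by (auto simp: simple_graph_def)
next
  have "path_decomposition {0::nat, 1} {{0, 1}} [{0, 1}]" "pd_width [{0::nat, 1}] = 1"
    by (auto simp: path_decomposition_def pd_width_def)
  then show "pathwidth {0::nat, 1} {{0, 1}} \<le> 1"
    unfolding pathwidth_def by (intro Least_le) blast
next
  show "real (card {D. indep_dominating {0::nat, 1} {{0, 1}} D}) = 2 powr (real (card {0::nat, 1}) / 2)"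
    unfolding indep_dominating_K2 by simp
qed

end
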